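(* Let $G$ be a finite simple $(P_2\cup P_1)$-free graph. Then: (1) if $S\subseteq V(G)$ is a cutset of $G$, then every component of $G-S$ consists of a single vertex; (2) if $S$ is a minimal cutset of $G$ (no proper subset of $S$ is a cutset), then every vertex of $S$ is adjacent to every vertex of $V(G)\setminus S$, i.e., the bipartite graph $G[S,V(G)\setminus S]$ is complete bipartite; (3) $\kappa(G)=\delta(G)$; (4) $\delta(G)\ge |V(G)|-\alpha(G)$.
   Context: $P_2\cup P_1$ is the graph on three vertices consisting of one edge and one isolated vertex; $G$ is $(P_2\cup P_1)$-free if it has no induced subgraph isomorphic to $P_2\cup P_1$. A cutset of $G$ is a set $S\subseteq V(G)$ such that $G-S$ has at least two components. $G[S,V(G)\setminus S]$ denotes the bipartite graph with parts $S$ and $V(G)\setminus S$ whose edges are the edges of $G$ between these parts. $\delta(G)$ is the minimum degree, $\alpha(G)$ the independence number, and $\kappa(G)$ the connectivity: the minimum size of a cutset if $G$ is noncomplete, and $|V(G)|-1$ if $G$ is complete. *)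

theory Defs
  imports Main
begin

definition simple_graph :: "'a set \<Rightarrow> ('a \<Rightarrow> 'a \<Rightarrow> bool) \<Rightarrow> bool" where
  "simple_graph V E \<longleftrightarrow> finite V \<and> (\<forall>x y. E x y \<longrightarrow> x \<in> V \<and> y \<in> V)
     \<and> (\<forall>x y. E x y \<longrightarrow> E y x) \<and> (\<forall>x. \<not> E x x)"

text \<open>G has no induced subgraph isomorphic to P2 \<union> P1 (an edge plus an isolated vertex).\<close>
definition P2P1_free :: "'a set \<Rightarrow> ('a \<Rightarrow> 'a \<Rightarrow> bool) \<Rightarrow> bool" where
  "P2P1_free V E \<longleftrightarrow> \<not> (\<exists>a\<in>V. \<exists>b\<in>V. \<exists>c\<in>V. a \<noteq> c \<and> b \<noteq> c \<and> E a b \<and> \<not> E a c \<and> \<not> E b c)"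

definition conn_in :: "'a set \<Rightarrow> ('a \<Rightarrow> 'a \<Rightarrow> bool) \<Rightarrow> 'a set \<Rightarrow> 'a \<Rightarrow> 'a \<Rightarrow> bool" where
  "conn_in V E S = (\<lambda>x y. E x y \<and> x \<in> V - S \<and> y \<in> V - S)\<^sup>*\<^sup>*"

definition component :: "'a set \<Rightarrow> ('a \<Rightarrow> 'a \<Rightarrow> bool) \<Rightarrow> 'a set \<Rightarrow> 'a \<Rightarrow> 'a set" where
  "component V E S x = {y \<in> V - S. conn_in V E S x y}"

definition components :: "'a set \<Rightarrow> ('a \<Rightarrow> 'a \<Rightarrow> bool) \<Rightarrow> 'a set \<Rightarrow> 'a set set" where
  "components V E S = component V E S ` (V - S)"

definition cutset :: "'a set \<Rightarrow> ('a \<Rightarrow> 'a \<Rightarrow> bool) \<Rightarrow> 'a set \<Rightarrow> bool" where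
  "cutset V E S \<longleftrightarrow> S \<subseteq> V \<and> card (components V E S) \<ge> 2"

definition minimal_cutset :: "'a set \<Rightarrow> ('a \<Rightarrow> 'a \<Rightarrow> bool) \<Rightarrow> 'a set \<Rightarrow> bool" where
  "minimal_cutset V E S \<longleftrightarrow> cutset V E S \<and> (\<forall>T. T \<subset> S \<longrightarrow> \<not> cutset V E T)"

definition degree :: "'a set \<Rightarrow> ('a \<Rightarrow> 'a \<Rightarrow> bool) \<Rightarrow> 'a \<Rightarrow> nat" where
  "degree V E v = card {u \<in> V. E v u}"

definition min_degree :: "'a set \<Rightarrow> ('a \<Rightarrow> 'a \<Rightarrow> bool) \<Rightarrow> nat" where
  "min_degree V E = Min (degree V E ` V)"

definition independent :: "'a set \<Rightarrow> ('a \<Rightarrow> 'a \<Rightarrow> bool) \<Rightarrow> 'a set \<Rightarrow> bool" where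
  "independent V E I \<longleftrightarrow> I \<subseteq> V \<and> (\<forall>x\<in>I. \<forall>y\<in>I. \<not> E x y)"

definition independence_number :: "'a set \<Rightarrow> ('a \<Rightarrow> 'a \<Rightarrow> bool) \<Rightarrow> nat" where
  "independence_number V E = Max {card I | I. independent V E I}"

definition complete_graph :: "'a set \<Rightarrow> ('a \<Rightarrow> 'a \<Rightarrow> bool) \<Rightarrow> bool" where
  "complete_graph V E \<longleftrightarrow> (\<forall>x\<in>V. \<forall>y\<in>V. x \<noteq> y \<longrightarrow> E x y)"

definition connectivity :: "'a set \<Rightarrow> ('a \<Rightarrow> 'a \<Rightarrow> bool) \<Rightarrow> nat" where
  "connectivity V E = (if complete_graph V E then card V - 1
                       else Min {card S | S. cutset V E S})"

end

theory Submission
  imports Defs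
begin

text \<open>In a \<open>(P\<^sub>2 \<union> P\<^sub>1)\<close>-free graph the two ends of an edge dominate every other
  vertex, since a vertex adjacent to neither would induce \<open>P\<^sub>2 \<union> P\<^sub>1\<close>. So an edge
  surviving in \<open>G - S\<close> keeps \<open>G - S\<close> connected, and \<open>G - S\<close> is edgeless whenever \<open>S\<close> is a
  cutset. Consequently a vertex outside a cutset has all its neighbours in it, giving
  \<open>\<kappa> \<ge> \<delta>\<close>, while the neighbourhood of a vertex of minimum degree in a noncomplete graph
  isolates that vertex, giving \<open>\<kappa> \<le> \<delta>\<close>. A vertex of a minimal cutset with a
  non-neighbour \<open>v\<close> outside could be dropped from the cutset, \<open>v\<close> remaining isolated.
  Finally, the non-neighbourhood of any vertex is independent, whence \<open>\<delta> \<ge> n - \<alpha>\<close>.\<close>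

lemma simple_graph_finite: "simple_graph V E \<Longrightarrow> finite V"
  unfolding simple_graph_def by blast

lemma simple_graph_sym: "simple_graph V E \<Longrightarrow> E x y \<Longrightarrow> E y x"
  unfolding simple_graph_def by blast

lemma simple_graph_irrefl: "simple_graph V E \<Longrightarrow> \<not> E x x"
  unfolding simple_graph_def by blast

lemma two_le_card_iff: "finite A \<Longrightarrow> 2 \<le> card A \<longleftrightarrow> (\<exists>a\<in>A. \<exists>b\<in>A. a \<noteq> b)"
  by (metis One_nat_def Suc_1 card_le_Suc0_iff_eq not_less_eq_eq)

lemma self_in_component: "x \<in> V - S \<Longrightarrow> x \<in> component V E S x"
  unfolding component_def conn_in_def by simp

lemma conn_in_sym: "simple_graph V E \<Longrightarrow> conn_in V E S x y \<Longrightarrow> conn_in V E S y x"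
  unfolding conn_in_def
  by (rule sympD[OF symp_rtranclp]) (auto simp: symp_def dest: simple_graph_sym)

lemma conn_in_edge: "a \<in> V - S \<Longrightarrow> b \<in> V - S \<Longrightarrow> E a b \<Longrightarrow> conn_in V E S a b"
  unfolding conn_in_def by (rule r_into_rtranclp) simp

lemma conn_in_trans: "conn_in V E S a b \<Longrightarrow> conn_in V E S b c \<Longrightarrow> conn_in V E S a c"
  unfolding conn_in_def by (rule rtranclp_trans)

lemma component_isolated:
  assumes "x \<in> V - S" and "\<forall>z\<in>V - S. \<not> E x z"
  shows "component V E S x = {x}"
proof -
  have "conn_in V E S x y \<Longrightarrow> y = x" for y
    unfolding conn_in_def by (induction rule: rtranclp_induct) (use assms in auto)
  with assms(1) show ?thesis
    unfolding component_def by (auto simp: conn_in_def)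
qed

lemma cutset_iff:
  assumes "finite V"
  shows "cutset V E S \<longleftrightarrow>
    S \<subseteq> V \<and> (\<exists>x\<in>V - S. \<exists>y\<in>V - S. component V E S x \<noteq> component V E S y)"
  using assms unfolding cutset_def components_def by (simp add: two_le_card_iff)

lemma cutset_two_outside:
  assumes "finite V" and "cutset V E S"
  obtains x y where "x \<in> V - S" "y \<in> V - S" "x \<noteq> y"
  using assms by (auto simp: cutset_iff)

lemma cutset_if_isolated:
  assumes "finite V" "S \<subseteq> V" "x \<in> V - S" "\<forall>z\<in>V - S. \<not> E x z" "y \<in> V - S" "y \<noteq> x"
  shows "cutset V E S"
proof -
  have "y \<in> component V E S y" using \<open>y \<in> V - S\<close> by (rule self_in_component)
  moreover have "component V E S x = {x}" using assms(3,4) by (rule component_isolated)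
  ultimately have "component V E S y \<noteq> component V E S x" using \<open>y \<noteq> x\<close> by blast
  with assms show ?thesis unfolding cutset_iff[OF \<open>finite V\<close>] by blast
qed

lemma P2P1_free_edge_dominating:
  assumes "P2P1_free V E" "E x z" "x \<in> V" "z \<in> V" "w \<in> V"
  shows "w = x \<or> w = z \<or> E x w \<or> E z w"
  using assms unfolding P2P1_free_def by metis

lemma P2P1_free_components_if_edge:
  assumes sg: "simple_graph V E" and free: "P2P1_free V E"
    and x: "x \<in> V - S" and z: "z \<in> V - S" and "E x z"
  shows "components V E S = {V - S}"
proof -
  have xz: "conn_in V E S x z" using x z \<open>E x z\<close> by (rule conn_in_edge)
  have reach: "conn_in V E S x w" if w: "w \<in> V - S" for w
  proof -
    consider "w = x" | "w = z" | "E x w" | "E z w"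
      using P2P1_free_edge_dominating[OF free \<open>E x z\<close>] x z w by blast
    then show ?thesis
    proof cases
      case 1
      then show ?thesis by (simp add: conn_in_def)
    next
      case 2
      with xz show ?thesis by simp
    next
      case 3
      with x w show ?thesis by (rule conn_in_edge)
    next
      case 4
      with z w have "conn_in V E S z w" by (rule conn_in_edge)
      with xz show ?thesis by (rule conn_in_trans)
    qed
  qed
  have "component V E S a = V - S" if a: "a \<in> V - S" for a
  proof -
    have "conn_in V E S a w" if "w \<in> V - S" for w
      using conn_in_trans[OF conn_in_sym[OF sg reach[OF a]] reach[OF that]] .
    then show ?thesis unfolding component_def by blast
  qed
  with x show ?thesis unfolding components_def by (metis image_cong image_constant)
qed

lemma cutset_complement_independent:
  assumes "simple_graph V E" "P2P1_free V E" "cutset V E S"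
  shows "independent V E (V - S)"
  unfolding independent_def
proof (intro conjI ballI notI)
  fix x z assume "x \<in> V - S" "z \<in> V - S" "E x z"
  with assms(1,2) have "components V E S = {V - S}" by (rule P2P1_free_components_if_edge)
  with \<open>cutset V E S\<close> show False unfolding cutset_def by simp
qed blast

lemma card_cutset_component:
  assumes "simple_graph V E" "P2P1_free V E" "cutset V E S" "C \<in> components V E S"
  shows "card C = 1"
proof -
  obtain x where x: "x \<in> V - S" and C: "C = component V E S x"
    using assms(4) unfolding components_def by blast
  have "\<forall>z\<in>V - S. \<not> E x z"
    using cutset_complement_independent[OF assms(1-3)] x unfolding independent_def by blast
  with x C show ?thesis by (simp add: component_isolated)
qed

lemma minimal_cutset_adjacent:
  assumes sg: "simple_graph V E" and free: "P2P1_free V E" and min: "minimal_cutset V E S"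
    and s: "s \<in> S" and v: "v \<in> V - S"
  shows "E s v"
proof (rule ccontr)
  assume "\<not> E s v"
  have cut: "cutset V E S" and SV: "S \<subseteq> V"
    using min unfolding minimal_cutset_def cutset_def by blast+
  have finV: "finite V" using simple_graph_finite[OF sg] .
  obtain w where w: "w \<in> V - S" "w \<noteq> v"
    using cutset_two_outside[OF finV cut] by metis
  have "\<forall>z\<in>V - S. \<not> E v z"
    using cutset_complement_independent[OF sg free cut] v unfolding independent_def by blast
  moreover have "\<not> E v s" using \<open>\<not> E s v\<close> simple_graph_sym[OF sg] by blast
  ultimately have isolated: "\<forall>z\<in>V - (S - {s}). \<not> E v z" by blast
  have "S - {s} \<subseteq> V" "v \<in> V - (S - {s})" "w \<in> V - (S - {s})"
    using SV v w by auto
  with finV isolated \<open>w \<noteq> v\<close> have "cutset V E (S - {s})"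
    by (intro cutset_if_isolated[where x = v and y = w])
  moreover have "S - {s} \<subset> S" using s by blast
  ultimately show False using min unfolding minimal_cutset_def by blast
qed

definition neighbours :: "'a set \<Rightarrow> ('a \<Rightarrow> 'a \<Rightarrow> bool) \<Rightarrow> 'a \<Rightarrow> 'a set" where
  "neighbours V E v = {u \<in> V. E v u}"

lemma degree_eq_card_neighbours: "degree V E v = card (neighbours V E v)"
  unfolding degree_def neighbours_def ..

lemma min_degree_le_degree: "finite V \<Longrightarrow> x \<in> V \<Longrightarrow> min_degree V E \<le> degree V E x"
  unfolding min_degree_def by simp

lemma min_degree_attained:
  assumes "finite V" "V \<noteq> {}"
  obtains v where "v \<in> V" "degree V E v = min_degree V E"
proof -
  have "min_degree V E \<in> degree V E ` V"
    unfolding min_degree_def using assms by (intro Min_in) auto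
  then show thesis using that by (metis imageE)
qed

lemma degree_complete_graph:
  assumes "simple_graph V E" "complete_graph V E" "x \<in> V"
  shows "degree V E x = card V - 1"
proof -
  have "neighbours V E x = V - {x}"
    using assms simple_graph_irrefl[OF assms(1)]
    unfolding neighbours_def complete_graph_def by auto
  with assms show ?thesis by (simp add: degree_eq_card_neighbours simple_graph_finite)
qed

lemma min_degree_not_complete_graph:
  assumes sg: "simple_graph V E" and "\<not> complete_graph V E"
  shows "min_degree V E + 2 \<le> card V"
proof -
  obtain x y where xy: "x \<in> V" "y \<in> V" "x \<noteq> y" "\<not> E x y"
    using assms(2) unfolding complete_graph_def by blast
  have finV: "finite V" using simple_graph_finite[OF sg] .
  have "neighbours V E x \<subseteq> V - {x, y}"
    using xy simple_graph_irrefl[OF sg] unfolding neighbours_def by auto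
  then have "degree V E x \<le> card (V - {x, y})"
    using finV by (simp add: degree_eq_card_neighbours card_mono)
  also have "\<dots> = card V - 2" using xy finV by simp
  finally have "degree V E x \<le> card V - 2" .
  moreover have "2 \<le> card V" using card_mono[OF finV, of "{x, y}"] xy by simp
  ultimately show ?thesis using min_degree_le_degree[OF finV xy(1), of E] by linarith
qed

lemma neighbours_cutset:
  assumes sg: "simple_graph V E" and v: "v \<in> V" and deg: "degree V E v + 2 \<le> card V"
  shows "cutset V E (neighbours V E v)"
proof -
  let ?N = "neighbours V E v"
  have finV: "finite V" using simple_graph_finite[OF sg] .
  have NV: "?N \<subseteq> V" unfolding neighbours_def by blast
  have "card (V - ?N) = card V - card ?N"
    using finV NV by (simp add: card_Diff_subset finite_subset)
  with deg have "2 \<le> card (V - ?N)" by (simp add: degree_eq_card_neighbours)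
  then obtain a b where "a \<in> V - ?N" "b \<in> V - ?N" "a \<noteq> b"
    using finV by (auto simp: two_le_card_iff)
  then obtain u where u: "u \<in> V - ?N" "u \<noteq> v" by metis
  have vN: "v \<in> V - ?N" using v simple_graph_irrefl[OF sg] unfolding neighbours_def by blast
  have isolated: "\<forall>z\<in>V - ?N. \<not> E v z" unfolding neighbours_def by blast
  show ?thesis using finV NV vN isolated u by (rule cutset_if_isolated)
qed

lemma min_degree_le_card_cutset:
  assumes sg: "simple_graph V E" and free: "P2P1_free V E" and cut: "cutset V E S"
  shows "min_degree V E \<le> card S"
proof -
  have finV: "finite V" using simple_graph_finite[OF sg] .
  obtain z where z: "z \<in> V - S" using cutset_two_outside[OF finV cut] by metis
  have "neighbours V E z \<subseteq> S"
    using cutset_complement_independent[OF sg free cut] z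
    unfolding independent_def neighbours_def by blast
  moreover have "finite S" using cut finV unfolding cutset_def by (blast intro: finite_subset)
  ultimately have "degree V E z \<le> card S" by (simp add: degree_eq_card_neighbours card_mono)
  with min_degree_le_degree[OF finV, of z E] z show ?thesis by simp
qed

lemma connectivity_eq_min_degree:
  assumes sg: "simple_graph V E" and "V \<noteq> {}" and free: "P2P1_free V E"
  shows "connectivity V E = min_degree V E"
proof -
  have finV: "finite V" using simple_graph_finite[OF sg] .
  obtain v where v: "v \<in> V" and deg_v: "degree V E v = min_degree V E"
    using min_degree_attained[OF finV \<open>V \<noteq> {}\<close>] .
  show ?thesis
  proof (cases "complete_graph V E")
    case True
    with sg v deg_v show ?thesis
      unfolding connectivity_def by (simp add: degree_complete_graph)
  next
    case False
    let ?K = "{card S | S. cutset V E S}"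
    have "cutset V E (neighbours V E v)"
      using neighbours_cutset[OF sg v] min_degree_not_complete_graph[OF sg False] deg_v by simp
    then have "min_degree V E \<in> ?K"
      using deg_v[symmetric] unfolding degree_eq_card_neighbours by blast
    moreover have "finite ?K"
    proof (rule finite_subset)
      show "?K \<subseteq> card ` Pow V" unfolding cutset_def by blast
    qed (use finV in simp)
    moreover have "\<And>k. k \<in> ?K \<Longrightarrow> min_degree V E \<le> k"
      using min_degree_le_card_cutset[OF sg free] by blast
    ultimately have "Min ?K = min_degree V E" by (intro Min_eqI)
    with False show ?thesis unfolding connectivity_def by simp
  qed
qed

lemma non_neighbours_independent:
  assumes sg: "simple_graph V E" and free: "P2P1_free V E" and v: "v \<in> V"
  shows "independent V E (V - neighbours V E v)"
  unfolding independent_def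
proof (intro conjI ballI notI)
  fix a b assume a: "a \<in> V - neighbours V E v" and b: "b \<in> V - neighbours V E v" and "E a b"
  then have "a \<noteq> v" "b \<noteq> v" "\<not> E v a" "\<not> E v b"
    using simple_graph_sym[OF sg] unfolding neighbours_def by auto
  with a b v \<open>E a b\<close> show False
    using P2P1_free_edge_dominating[OF free \<open>E a b\<close>, of v] simple_graph_sym[OF sg] by blast
qed auto

lemma card_le_independence_number:
  assumes "finite V" "independent V E I"
  shows "card I \<le> independence_number V E"
proof -
  have "finite {card I | I. independent V E I}"
  proof (rule finite_subset)
    show "{card I | I. independent V E I} \<subseteq> card ` Pow V" unfolding independent_def by blast
  qed (use assms(1) in simp)
  with assms(2) show ?thesis unfolding independence_number_def by (blast intro: Max_ge)
qed

lemma card_minus_independence_number_le_min_degree: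
  assumes sg: "simple_graph V E" and "V \<noteq> {}" and free: "P2P1_free V E"
  shows "card V - independence_number V E \<le> min_degree V E"
proof -
  have finV: "finite V" using simple_graph_finite[OF sg] .
  obtain v where v: "v \<in> V" and deg_v: "degree V E v = min_degree V E"
    using min_degree_attained[OF finV \<open>V \<noteq> {}\<close>] .
  have "card (V - neighbours V E v) \<le> independence_number V E"
    using card_le_independence_number[OF finV non_neighbours_independent[OF sg free v]] .
  moreover have "card (V - neighbours V E v) = card V - degree V E v"
    using finV by (simp add: degree_eq_card_neighbours card_Diff_subset finite_subset neighbours_def)
  ultimately show ?thesis using deg_v by simp
qed

theorem lemma2p6:
  fixes V :: "'a set" and E :: "'a \<Rightarrow> 'a \<Rightarrow> bool"
  assumes "simple_graph V E" and "V \<noteq> {}" and "P2P1_free V E"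
  shows "(\<forall>S. cutset V E S \<longrightarrow> (\<forall>C\<in>components V E S. card C = 1))
       \<and> (\<forall>S. minimal_cutset V E S \<longrightarrow> (\<forall>s\<in>S. \<forall>v\<in>V - S. E s v))
       \<and> connectivity V E = min_degree V E
       \<and> min_degree V E \<ge> card V - independence_number V E"
  using card_cutset_component[OF assms(1,3)] minimal_cutset_adjacent[OF assms(1,3)]
    connectivity_eq_min_degree[OF assms] card_minus_independence_number_le_min_degree[OF assms]
  by blast

end
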